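(* Let $\Phi\in\mathbb{R}^{z\times m}$ be a signalling scheme, $q$ a prior, and $\zeta^u$ a signal with $\sum_\ell\phi^u_\ell q_\ell>0$. For a flow $f\in\mathcal{H}$ let $S_u(f)$ be the set of $\psi\in\Delta_1^m$ such that $$\sum_{s\in[m]}\phi^u_s\big(C^{\theta_s}_p(f)-C^{\theta_s}_r(f)\big)\psi_s=0\ \text{ for all } p,r\in\mathcal{P} \text{ with } f_p>0,f_r>0,$$ $$\sum_{s\in[m]}\phi^u_s\big(C^{\theta_s}_p(f)-C^{\theta_s}_r(f)\big)\psi_s\le0\ \text{ for all } p,r\in\mathcal{P} \text{ with } f_p>0,f_r=0.$$ Then for any two $\widetilde q^{\zeta^u}$-WE $\widetilde f,\widehat f\in\mathcal{W}^{\widetilde q^{\zeta^u}}$ we have $S_u(\widetilde f)=S_u(\widehat f)$.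
   Context: Let $\mathcal{G}=(\mathcal{V},\mathcal{E})$ be a finite directed graph with an origin $v_o$ and a destination $v_d$, and let $\mathcal{P}$ be the (finite) set of acyclic directed paths from $v_o$ to $v_d$, $n=|\mathcal{P}|$. The set of feasible path-flows is $\mathcal{H}=\{f\in\mathbb{R}^n_{\ge0}:\sum_{p\in\mathcal{P}}f_p=1\}$. For a path-flow $f$, the flow on edge $e_k$ is $f_{e_k}=\sum_{p\ni e_k}f_p$. There is a finite set of states $\Theta=\{\theta_1,\dots,\theta_m\}$; in each state $\theta_s$ each edge $e_k$ has a known cost function $C^{\theta_s}_{e_k}:\mathbb{R}_{\ge0}\to\mathbb{R}_{\ge0}$ that is continuous and strictly increasing. The cost of path $p$ in state $\theta_s$ is $C^{\theta_s}_p(f)=\sum_{e_k\in p}C^{\theta_s}_{e_k}(f_{e_k})$. For $\varphi\in\Delta_1^m:=\{x\in\mathbb{R}^m_{\ge0}:\sum_i x_i=1\}$ the expected cost of path $p$ is $C^\varphi_p(f)=\sum_{s}\varphi_sC^{\theta_s}_p(f)$. A flow $f\in\mathcal{H}$ is a $\varphi$-based Wardrop equilibrium ($\varphi$-WE) if for all $p$ with $f_p>0$ we have $C^\varphi_p(f)\le C^\varphi_r(f)$ for all $r\in\mathcal{P}$; $\mathcal{W}^\varphi$ denotes the set of $\varphi$-WE. A prior is a $q\in\Delta_1^m$ with $q_s>0$ for all $s$. A (public) signalling scheme with signals $\zeta^1,\dots,\zeta^z$ is a column-stochastic matrix $\Phi=(\phi^u_s)\in\mathbb{R}^{z\times m}_{\ge0}$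 (each column sums to $1$), where $\phi^u_s$ is the probability of sending $\zeta^u$ in state $\theta_s$. The posterior after $\zeta^u$ is $\widetilde q^{\zeta^u}_s=\phi^u_sq_s/\sum_{\ell}\phi^u_\ell q_\ell$. *)

theory Defs
  imports "HOL-Analysis.Analysis"
begin

text \<open>Directed (multi)graph: vertex set V, edge set E, each edge e has tail (tl_e e)
  and head (hd_e e).\<close>

definition odpath :: "'e set \<Rightarrow> ('e \<Rightarrow> 'v) \<Rightarrow> ('e \<Rightarrow> 'v) \<Rightarrow> 'v \<Rightarrow> 'v \<Rightarrow> 'e list \<Rightarrow> bool" where
  "odpath E tl_e hd_e vo vd es \<longleftrightarrow>
     set es \<subseteq> E \<and>
     (\<forall>i < length es. tl_e (es ! i) = (vo # map hd_e es) ! i) \<and>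
     last (vo # map hd_e es) = vd \<and>
     distinct (vo # map hd_e es)"

definition paths :: "'e set \<Rightarrow> ('e \<Rightarrow> 'v) \<Rightarrow> ('e \<Rightarrow> 'v) \<Rightarrow> 'v \<Rightarrow> 'v \<Rightarrow> 'e list set" where
  "paths E tl_e hd_e vo vd = {es. odpath E tl_e hd_e vo vd es}"

definition feasible :: "'e list set \<Rightarrow> ('e list \<Rightarrow> real) set" where
  "feasible P = {f. (\<forall>p\<in>P. f p \<ge> 0) \<and> (\<Sum>p\<in>P. f p) = 1}"

definition edge_flow :: "'e list set \<Rightarrow> ('e list \<Rightarrow> real) \<Rightarrow> 'e \<Rightarrow> real" where
  "edge_flow P f e = (\<Sum>p\<in>{p\<in>P. e \<in> set p}. f p)"

text \<open>Cost of path p in state s: C s e is the cost function of edge e in state s.\<close>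
definition path_cost :: "(nat \<Rightarrow> 'e \<Rightarrow> real \<Rightarrow> real) \<Rightarrow> 'e list set \<Rightarrow> nat
     \<Rightarrow> ('e list \<Rightarrow> real) \<Rightarrow> 'e list \<Rightarrow> real" where
  "path_cost C P s f p = (\<Sum>e\<in>set p. C s e (edge_flow P f e))"

definition exp_cost :: "nat \<Rightarrow> (nat \<Rightarrow> 'e \<Rightarrow> real \<Rightarrow> real) \<Rightarrow> 'e list set \<Rightarrow> (nat \<Rightarrow> real)
     \<Rightarrow> ('e list \<Rightarrow> real) \<Rightarrow> 'e list \<Rightarrow> real" where
  "exp_cost m C P \<phi> f p = (\<Sum>s<m. \<phi> s * path_cost C P s f p)"

definition prob_simplex :: "nat \<Rightarrow> (nat \<Rightarrow> real) set" where
  "prob_simplex m = {x. (\<forall>i<m. x i \<ge> 0) \<and> (\<Sum>i<m. x i) = 1}"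

definition wardrop :: "nat \<Rightarrow> (nat \<Rightarrow> 'e \<Rightarrow> real \<Rightarrow> real) \<Rightarrow> 'e list set \<Rightarrow> (nat \<Rightarrow> real)
     \<Rightarrow> ('e list \<Rightarrow> real) set" where
  "wardrop m C P \<phi> = {f \<in> feasible P.
      \<forall>p\<in>P. f p > 0 \<longrightarrow> (\<forall>r\<in>P. exp_cost m C P \<phi> f p \<le> exp_cost m C P \<phi> f r)}"

definition posterior :: "nat \<Rightarrow> (nat \<Rightarrow> nat \<Rightarrow> real) \<Rightarrow> (nat \<Rightarrow> real) \<Rightarrow> nat \<Rightarrow> nat \<Rightarrow> real" where
  "posterior m \<Phi> q u s = \<Phi> u s * q s / (\<Sum>l<m. \<Phi> u l * q l)"

definition S_set :: "nat \<Rightarrow> (nat \<Rightarrow> 'e \<Rightarrow> real \<Rightarrow> real) \<Rightarrow> 'e list set \<Rightarrow> (nat \<Rightarrow> nat \<Rightarrow> real)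
     \<Rightarrow> nat \<Rightarrow> ('e list \<Rightarrow> real) \<Rightarrow> (nat \<Rightarrow> real) set" where
  "S_set m C P \<Phi> u f = {\<psi> \<in> prob_simplex m.
     (\<forall>p\<in>P. \<forall>r\<in>P. f p > 0 \<and> f r > 0 \<longrightarrow>
        (\<Sum>s<m. \<Phi> u s * (path_cost C P s f p - path_cost C P s f r) * \<psi> s) = 0) \<and>
     (\<forall>p\<in>P. \<forall>r\<in>P. f p > 0 \<and> f r = 0 \<longrightarrow>
        (\<Sum>s<m. \<Phi> u s * (path_cost C P s f p - path_cost C P s f r) * \<psi> s) \<le> 0)}"

end

theory Submission
  imports Defs
begin

text \<open>Both equilibria are Wardrop equilibria for the same strictly increasing edge costs
  (the posterior mixture of the state costs), so the usual variational-inequality argument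
  shows that they induce the same edge flows. Hence every path cost, in every state, is the
  same under both flows. Moreover \<open>\<psi> \<in> S_u(f)\<close> says precisely that \<open>f\<close> is supported on paths
  minimising the edge-additive cost \<open>p \<mapsto> \<Sum>\<^sub>s \<phi>\<^sup>u\<^sub>s C\<^sup>s\<^sub>p \<psi>\<^sub>s\<close>, and a feasible flow is supported
  on minimisers of an edge-additive cost iff its average cost, which depends only on the edge
  flows, is at most every path cost. So membership in \<open>S_u\<close> transfers between the two flows.\<close>

definition minimal_on_support :: "'p set \<Rightarrow> ('p \<Rightarrow> real) \<Rightarrow> ('p \<Rightarrow> real) \<Rightarrow> bool" where
  "minimal_on_support P f k \<longleftrightarrow> (\<forall>p\<in>P. 0 < f p \<longrightarrow> (\<forall>r\<in>P. k p \<le> k r))"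

text \<open>Sums over infinite sets are \<open>0\<close>, so a total flow of \<open>1\<close> forces the path set to be finite.\<close>

lemma feasible_finite: "f \<in> feasible P \<Longrightarrow> finite P"
  using sum.infinite by (force simp: feasible_def)

lemma edge_flow_nonneg: "f \<in> feasible P \<Longrightarrow> 0 \<le> edge_flow P f e"
  unfolding edge_flow_def feasible_def by (auto intro: sum_nonneg)

lemma minimal_on_support_iff_average_le:
  assumes "finite P" and f: "f \<in> feasible P"
  shows "minimal_on_support P f k \<longleftrightarrow> (\<forall>r\<in>P. (\<Sum>p\<in>P. k p * f p) \<le> k r)"
proof -
  have f_nonneg: "\<forall>p\<in>P. 0 \<le> f p" and f_sum: "(\<Sum>p\<in>P. f p) = 1"
    using f by (auto simp: feasible_def)
  show ?thesis
  proof
    assume min: "minimal_on_support P f k"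
    show "\<forall>r\<in>P. (\<Sum>p\<in>P. k p * f p) \<le> k r"
    proof
      fix r assume "r \<in> P"
      have "(\<Sum>p\<in>P. k p * f p) \<le> (\<Sum>p\<in>P. k r * f p)"
      proof (rule sum_mono)
        fix p assume p: "p \<in> P"
        show "k p * f p \<le> k r * f p"
        proof (cases "0 < f p")
          case True
          then show ?thesis using min p \<open>r \<in> P\<close> by (simp add: minimal_on_support_def)
        next
          case False
          then have "f p = 0" using f_nonneg p by force
          then show ?thesis by simp
        qed
      qed
      also have "\<dots> = k r" by (simp add: sum_distrib_left[symmetric] f_sum)
      finally show "(\<Sum>p\<in>P. k p * f p) \<le> k r" .
    qed
  next
    assume avg: "\<forall>r\<in>P. (\<Sum>p\<in>P. k p * f p) \<le> k r"
    define \<mu> where "\<mu> = (\<Sum>p\<in>P. k p * f p)"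
    have "(\<Sum>p\<in>P. f p * (k p - \<mu>)) = (\<Sum>p\<in>P. k p * f p) - \<mu> * (\<Sum>p\<in>P. f p)"
      by (simp add: sum_subtractf sum_distrib_left algebra_simps)
    then have "(\<Sum>p\<in>P. f p * (k p - \<mu>)) = 0" by (simp add: \<mu>_def f_sum)
    moreover have "\<forall>p\<in>P. 0 \<le> f p * (k p - \<mu>)"
      using avg f_nonneg by (simp add: \<mu>_def)
    ultimately have "\<forall>p\<in>P. f p * (k p - \<mu>) = 0"
      by (simp add: sum_nonneg_eq_0_iff[OF \<open>finite P\<close>])
    show "minimal_on_support P f k"
      unfolding minimal_on_support_def
    proof (intro ballI impI)
      fix p r assume "p \<in> P" "0 < f p" "r \<in> P"
      then have "k p = \<mu>" using \<open>\<forall>p\<in>P. f p * (k p - \<mu>) = 0\<close> by fastforce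
      then show "k p \<le> k r" using avg \<open>r \<in> P\<close> by (simp add: \<mu>_def)
    qed
  qed
qed

lemma minimal_on_support_average_le:
  assumes "finite P" "f \<in> feasible P" "g \<in> feasible P" "minimal_on_support P f k"
  shows "(\<Sum>p\<in>P. k p * f p) \<le> (\<Sum>p\<in>P. k p * g p)"
proof -
  have g_nonneg: "\<forall>p\<in>P. 0 \<le> g p" and g_sum: "(\<Sum>p\<in>P. g p) = 1"
    using assms(3) by (auto simp: feasible_def)
  have "(\<Sum>p\<in>P. k p * f p) = (\<Sum>p\<in>P. (\<Sum>p\<in>P. k p * f p) * g p)"
    by (simp add: sum_distrib_left[symmetric] g_sum)
  also have "\<dots> \<le> (\<Sum>p\<in>P. k p * g p)"
  proof (rule sum_mono)
    fix p assume "p \<in> P"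
    then have "(\<Sum>p\<in>P. k p * f p) \<le> k p"
      using assms minimal_on_support_iff_average_le by blast
    then show "(\<Sum>p\<in>P. k p * f p) * g p \<le> k p * g p"
      using g_nonneg \<open>p \<in> P\<close> by (simp add: mult_right_mono)
  qed
  finally show ?thesis .
qed

lemma sum_edge_additive_cost_eq_edge_flow:
  assumes "finite P" "finite E" "\<forall>p\<in>P. set p \<subseteq> E"
  shows "(\<Sum>p\<in>P. (\<Sum>e\<in>set p. a e) * g p) = (\<Sum>e\<in>E. a e * edge_flow P g e)"
proof -
  have "a e * edge_flow P g e = (\<Sum>p\<in>P. if e \<in> set p then a e * g p else 0)" for e
    unfolding edge_flow_def sum.inter_filter[OF assms(1), symmetric] sum_distrib_left
    by (rule sum.cong) simp_all
  then have "(\<Sum>e\<in>E. a e * edge_flow P g e) = (\<Sum>e\<in>E. \<Sum>p\<in>P. if e \<in> set p then a e * g p else 0)"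
    by simp
  also have "\<dots> = (\<Sum>p\<in>P. \<Sum>e\<in>E. if e \<in> set p then a e * g p else 0)"
    by (rule sum.swap)
  also have "\<dots> = (\<Sum>p\<in>P. (\<Sum>e\<in>set p. a e) * g p)"
  proof (intro sum.cong refl)
    fix p assume "p \<in> P"
    then have "E \<inter> set p = set p" using assms(3) by auto
    then show "(\<Sum>e\<in>E. if e \<in> set p then a e * g p else 0) = (\<Sum>e\<in>set p. a e) * g p"
      using assms(2) by (simp add: sum.If_cases sum_distrib_right Int_def)
  qed
  finally show ?thesis by simp
qed

lemma minimal_on_support_transfer_edge_flow:
  assumes P: "finite P" and E: "finite E" and PE: "\<forall>p\<in>P. set p \<subseteq> E"
    and f: "f \<in> feasible P" and g: "g \<in> feasible P"
    and eq: "\<forall>e\<in>E. edge_flow P f e = edge_flow P g e"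
    and min: "minimal_on_support P f (\<lambda>p. \<Sum>e\<in>set p. a e)"
  shows "minimal_on_support P g (\<lambda>p. \<Sum>e\<in>set p. a e)"
proof -
  have "(\<Sum>p\<in>P. (\<Sum>e\<in>set p. a e) * g p) = (\<Sum>p\<in>P. (\<Sum>e\<in>set p. a e) * f p)"
    using eq by (simp add: sum_edge_additive_cost_eq_edge_flow[OF P E PE])
  then show ?thesis
    using min by (simp add: minimal_on_support_iff_average_le[OF P f]
        minimal_on_support_iff_average_le[OF P g])
qed

lemma strict_mono_on_gap_pos:
  fixes c :: "real \<Rightarrow> real"
  assumes "strict_mono_on {0..} c" "0 \<le> x" "0 \<le> y" "x \<noteq> y"
  shows "0 < (c x - c y) * (x - y)"
proof (cases "x < y")
  case True
  then have "c x < c y" using assms strict_mono_onD by fastforce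
  then show ?thesis using True by (simp add: mult_neg_neg)
next
  case False
  then have "y < x" using assms(4) by simp
  then have "c y < c x" using assms strict_mono_onD by fastforce
  then show ?thesis using \<open>y < x\<close> by simp
qed

lemma wardrop_edge_flow_unique:
  fixes c :: "'e \<Rightarrow> real \<Rightarrow> real"
  assumes P: "finite P" and E: "finite E" and PE: "\<forall>p\<in>P. set p \<subseteq> E"
    and mono: "\<forall>e\<in>E. strict_mono_on {0..} (c e)"
    and f: "f \<in> feasible P" and g: "g \<in> feasible P"
    and min_f: "minimal_on_support P f (\<lambda>p. \<Sum>e\<in>set p. c e (edge_flow P f e))"
    and min_g: "minimal_on_support P g (\<lambda>p. \<Sum>e\<in>set p. c e (edge_flow P g e))"
  shows "\<forall>e\<in>E. edge_flow P f e = edge_flow P g e"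
proof (rule ccontr)
  define x where "x = edge_flow P f"
  define y where "y = edge_flow P g"
  define gap where "gap e = (c e (x e) - c e (y e)) * (x e - y e)" for e
  assume "\<not> ?thesis"
  then obtain e0 where e0: "e0 \<in> E" "x e0 \<noteq> y e0" by (auto simp: x_def y_def)
  have xy_nonneg: "0 \<le> x e" "0 \<le> y e" for e
    using edge_flow_nonneg f g by (auto simp: x_def y_def)
  have gap_pos: "0 < gap e" if "e \<in> E" "x e \<noteq> y e" for e
    using strict_mono_on_gap_pos[of "c e"] mono xy_nonneg that by (simp add: gap_def)
  have gap_nonneg: "\<forall>e\<in>E. 0 \<le> gap e"
    using gap_pos by (force simp: gap_def)
  have "(\<Sum>e\<in>E. c e (x e) * x e) \<le> (\<Sum>e\<in>E. c e (x e) * y e)"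
    using minimal_on_support_average_le[OF P f g min_f]
    by (simp add: sum_edge_additive_cost_eq_edge_flow[OF P E PE] x_def y_def)
  moreover have "(\<Sum>e\<in>E. c e (y e) * y e) \<le> (\<Sum>e\<in>E. c e (y e) * x e)"
    using minimal_on_support_average_le[OF P g f min_g]
    by (simp add: sum_edge_additive_cost_eq_edge_flow[OF P E PE] x_def y_def)
  moreover have "(\<Sum>e\<in>E. gap e) = ((\<Sum>e\<in>E. c e (x e) * x e) - (\<Sum>e\<in>E. c e (x e) * y e))
      + ((\<Sum>e\<in>E. c e (y e) * y e) - (\<Sum>e\<in>E. c e (y e) * x e))"
    by (simp add: gap_def sum_subtractf[symmetric] sum.distrib[symmetric] algebra_simps)
  moreover have "0 < (\<Sum>e\<in>E. gap e)"
    using sum_pos2[OF E e0(1)] gap_pos[OF e0] gap_nonneg by blast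
  ultimately show False by linarith
qed

lemma strict_mono_on_convex_combination:
  fixes f :: "nat \<Rightarrow> real \<Rightarrow> real"
  assumes "\<phi> \<in> prob_simplex m" "\<forall>s<m. strict_mono_on A (f s)"
  shows "strict_mono_on A (\<lambda>x. \<Sum>s<m. \<phi> s * f s x)"
proof (rule strict_mono_onI)
  fix x y assume xy: "x \<in> A" "y \<in> A" "x < y"
  have \<phi>_nonneg: "\<forall>s<m. 0 \<le> \<phi> s" and \<phi>_sum: "(\<Sum>s<m. \<phi> s) = 1"
    using assms(1) by (auto simp: prob_simplex_def)
  obtain s0 where s0: "s0 < m" "0 < \<phi> s0"
  proof (rule ccontr)
    assume "\<not> thesis"
    then have "\<forall>s<m. \<phi> s \<le> 0" using that not_le by blast
    then have "(\<Sum>s<m. \<phi> s) \<le> 0" by (intro sum_nonpos) simp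
    with \<phi>_sum show False by simp
  qed
  have f_less: "f s x < f s y" if "s < m" for s
  proof -
    have "strict_mono_on A (f s)" using assms(2) that by blast
    then show ?thesis using xy by (rule strict_mono_onD)
  qed
  show "(\<Sum>s<m. \<phi> s * f s x) < (\<Sum>s<m. \<phi> s * f s y)"
  proof (rule sum_strict_mono_ex1)
    show "\<forall>s\<in>{..<m}. \<phi> s * f s x \<le> \<phi> s * f s y"
      using f_less \<phi>_nonneg by (simp add: less_imp_le mult_left_mono)
    show "\<exists>s\<in>{..<m}. \<phi> s * f s x < \<phi> s * f s y"
      using s0 f_less[OF s0(1)] by (intro bexI[of _ s0]) simp_all
  qed simp
qed

lemma posterior_in_prob_simplex:
  assumes "\<forall>s<m. 0 \<le> \<Phi> u s" "\<forall>s<m. 0 \<le> q s" "0 < (\<Sum>l<m. \<Phi> u l * q l)"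
  shows "posterior m \<Phi> q u \<in> prob_simplex m"
  unfolding prob_simplex_def posterior_def
proof (intro CollectI conjI allI impI)
  fix s assume "s < m"
  then show "0 \<le> \<Phi> u s * q s / (\<Sum>l<m. \<Phi> u l * q l)"
    using assms by (simp add: less_imp_le)
next
  show "(\<Sum>s<m. \<Phi> u s * q s / (\<Sum>l<m. \<Phi> u l * q l)) = 1"
    using assms(3) by (simp add: sum_divide_distrib[symmetric])
qed

lemma exp_cost_edge_additive:
  "exp_cost m C P \<phi> f p = (\<Sum>e\<in>set p. \<Sum>s<m. \<phi> s * C s e (edge_flow P f e))"
  unfolding exp_cost_def path_cost_def sum_distrib_left by (subst sum.swap) simp

lemma wardrop_iff_minimal_on_support:
  "f \<in> wardrop m C P \<phi> \<longleftrightarrow> f \<in> feasible P \<and> minimal_on_support P f (exp_cost m C P \<phi> f)"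
  by (simp add: wardrop_def minimal_on_support_def)

lemma S_set_iff_minimal_on_support:
  assumes "f \<in> feasible P"
  shows "\<psi> \<in> S_set m C P \<Phi> u f \<longleftrightarrow> \<psi> \<in> prob_simplex m \<and>
    minimal_on_support P f (\<lambda>p. \<Sum>s<m. \<Phi> u s * path_cost C P s f p * \<psi> s)"
proof -
  define w where "w = (\<lambda>p. \<Sum>s<m. \<Phi> u s * path_cost C P s f p * \<psi> s)"
  have diff: "(\<Sum>s<m. \<Phi> u s * (path_cost C P s f p - path_cost C P s f r) * \<psi> s) = w p - w r"
    for p r by (simp add: w_def sum_subtractf[symmetric] algebra_simps)
  have "\<psi> \<in> S_set m C P \<Phi> u f \<longleftrightarrow> \<psi> \<in> prob_simplex m \<and>
      (\<forall>p\<in>P. \<forall>r\<in>P. 0 < f p \<and> 0 < f r \<longrightarrow> w p = w r) \<and>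
      (\<forall>p\<in>P. \<forall>r\<in>P. 0 < f p \<and> f r = 0 \<longrightarrow> w p \<le> w r)"
    by (simp add: S_set_def diff)
  also have "\<dots> \<longleftrightarrow> \<psi> \<in> prob_simplex m \<and> minimal_on_support P f w"
  proof (intro conj_cong refl iffI)
    assume cond: "(\<forall>p\<in>P. \<forall>r\<in>P. 0 < f p \<and> 0 < f r \<longrightarrow> w p = w r) \<and>
      (\<forall>p\<in>P. \<forall>r\<in>P. 0 < f p \<and> f r = 0 \<longrightarrow> w p \<le> w r)"
    show "minimal_on_support P f w"
      unfolding minimal_on_support_def
    proof (intro ballI impI)
      fix p r assume p: "p \<in> P" "0 < f p" and r: "r \<in> P"
      have "f r = 0 \<or> 0 < f r" using assms r by (force simp: feasible_def)
      then show "w p \<le> w r"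
      proof
        assume "f r = 0"
        then show ?thesis using cond p r by blast
      next
        assume "0 < f r"
        then have "w p = w r" using cond p r by blast
        then show ?thesis by simp
      qed
    qed
  next
    assume min: "minimal_on_support P f w"
    show "(\<forall>p\<in>P. \<forall>r\<in>P. 0 < f p \<and> 0 < f r \<longrightarrow> w p = w r) \<and>
      (\<forall>p\<in>P. \<forall>r\<in>P. 0 < f p \<and> f r = 0 \<longrightarrow> w p \<le> w r)"
    proof (intro conjI ballI impI)
      fix p r assume "p \<in> P" "r \<in> P" "0 < f p \<and> 0 < f r"
      then have "w p \<le> w r" "w r \<le> w p"
        using min unfolding minimal_on_support_def by blast+
      then show "w p = w r" by (rule order.antisym)
    next
      fix p r assume "p \<in> P" "r \<in> P" "0 < f p \<and> f r = 0"
      then show "w p \<le> w r" using min unfolding minimal_on_support_def by blast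
    qed
  qed
  finally show ?thesis unfolding w_def .
qed

lemma S_set_subset_if_edge_flow_eq:
  assumes P: "finite P" and E: "finite E" and PE: "\<forall>p\<in>P. set p \<subseteq> E"
    and f: "f \<in> feasible P" and g: "g \<in> feasible P"
    and eq: "\<forall>e\<in>E. edge_flow P f e = edge_flow P g e"
  shows "S_set m C P \<Phi> u f \<subseteq> S_set m C P \<Phi> u g"
proof
  fix \<psi> assume \<psi>: "\<psi> \<in> S_set m C P \<Phi> u f"
  define a where "a h e = (\<Sum>s<m. \<Phi> u s * C s e (edge_flow P h e) * \<psi> s)" for h e
  have cost: "(\<Sum>s<m. \<Phi> u s * path_cost C P s h p * \<psi> s) = (\<Sum>e\<in>set p. a h e)" for h p
    unfolding a_def path_cost_def sum_distrib_left sum_distrib_right by (subst sum.swap) simp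
  have a_eq: "(\<Sum>e\<in>set p. a g e) = (\<Sum>e\<in>set p. a f e)" if "p \<in> P" for p
  proof (rule sum.cong[OF refl])
    fix e assume "e \<in> set p"
    then have "e \<in> E" using PE that by blast
    then show "a g e = a f e" using eq by (simp add: a_def)
  qed
  have simplex: "\<psi> \<in> prob_simplex m"
    and min_f: "minimal_on_support P f (\<lambda>p. \<Sum>e\<in>set p. a f e)"
    using \<psi> unfolding S_set_iff_minimal_on_support[OF f] cost by (rule conjunct1, rule conjunct2)
  from min_f have "minimal_on_support P g (\<lambda>p. \<Sum>e\<in>set p. a f e)"
    by (rule minimal_on_support_transfer_edge_flow[OF P E PE f g eq])
  then have "minimal_on_support P g (\<lambda>p. \<Sum>e\<in>set p. a g e)"
    using a_eq by (simp add: minimal_on_support_def)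
  then show "\<psi> \<in> S_set m C P \<Phi> u g"
    unfolding S_set_iff_minimal_on_support[OF g] cost using simplex by (rule conjI[rotated])
qed

theorem corollary1:
  fixes V :: "'v set" and E :: "'e set" and tl_e hd_e :: "'e \<Rightarrow> 'v"
    and vo vd :: 'v and m z u :: nat
    and C :: "nat \<Rightarrow> 'e \<Rightarrow> real \<Rightarrow> real"
    and q :: "nat \<Rightarrow> real" and \<Phi> :: "nat \<Rightarrow> nat \<Rightarrow> real"
    and ft fh :: "'e list \<Rightarrow> real"
  assumes "finite V" and "finite E"
    and "\<forall>e\<in>E. tl_e e \<in> V \<and> hd_e e \<in> V"
    and "vo \<in> V" and "vd \<in> V"
    and "\<forall>s<m. \<forall>e\<in>E. continuous_on {0..} (C s e)"
    and "\<forall>s<m. \<forall>e\<in>E. strict_mono_on {0..} (C s e)"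
    and "\<forall>s<m. \<forall>e\<in>E. \<forall>x\<ge>0. C s e x \<ge> 0"
    and "q \<in> prob_simplex m" and "\<forall>s<m. q s > 0"
    and "\<forall>u'<z. \<forall>s<m. \<Phi> u' s \<ge> 0"
    and "\<forall>s<m. (\<Sum>u'<z. \<Phi> u' s) = 1"
    and "u < z"
    and "(\<Sum>l<m. \<Phi> u l * q l) > 0"
    and "ft \<in> wardrop m C (paths E tl_e hd_e vo vd) (posterior m \<Phi> q u)"
    and "fh \<in> wardrop m C (paths E tl_e hd_e vo vd) (posterior m \<Phi> q u)"
  shows "S_set m C (paths E tl_e hd_e vo vd) \<Phi> u ft = S_set m C (paths E tl_e hd_e vo vd) \<Phi> u fh"
proof -
  define P where "P = paths E tl_e hd_e vo vd"
  define \<phi> where "\<phi> = posterior m \<Phi> q u"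
  have ft: "ft \<in> feasible P" and fh: "fh \<in> feasible P"
    and min_ft: "minimal_on_support P ft (exp_cost m C P \<phi> ft)"
    and min_fh: "minimal_on_support P fh (exp_cost m C P \<phi> fh)"
    using assms(15,16) by (simp_all add: wardrop_iff_minimal_on_support P_def \<phi>_def)
  have P: "finite P" using feasible_finite[OF ft] .
  have PE: "\<forall>p\<in>P. set p \<subseteq> E" by (auto simp: P_def paths_def odpath_def)
  have \<phi>: "\<phi> \<in> prob_simplex m"
    unfolding \<phi>_def by (rule posterior_in_prob_simplex) (use assms(10,11,13,14) in auto)
  have mono: "\<forall>e\<in>E. strict_mono_on {0..} (\<lambda>x. \<Sum>s<m. \<phi> s * C s e x)"
    using assms(7) by (auto intro: strict_mono_on_convex_combination[OF \<phi>])
  have edge_eq: "\<forall>e\<in>E. edge_flow P ft e = edge_flow P fh e"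
    using wardrop_edge_flow_unique[OF P assms(2) PE mono ft fh] min_ft min_fh
    unfolding exp_cost_edge_additive by blast
  have "S_set m C P \<Phi> u ft \<subseteq> S_set m C P \<Phi> u fh"
    by (rule S_set_subset_if_edge_flow_eq[OF P assms(2) PE ft fh edge_eq])
  moreover have "S_set m C P \<Phi> u fh \<subseteq> S_set m C P \<Phi> u ft"
    by (rule S_set_subset_if_edge_flow_eq[OF P assms(2) PE fh ft]) (use edge_eq in simp)
  ultimately show ?thesis unfolding P_def by (rule subset_antisym)
qed

end
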